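(* Let $\mathcal{G}_n$ be the random graph described in the context and, for $\delta_n>0$ and $u\in\mathcal{V}_n^k$, let $$A_n^k(u)=\Big\{\big|N_n^k(u)-a_nV_n^k\big|\ge\sqrt{a_nV_n^k\delta_n}\Big\}.$$ Suppose the sequences $\gamma_n>0$ and $\delta_n>0$ satisfy $$\lim_{n\to\infty}\delta_n=\infty,\qquad\limsup_{n\to\infty}\frac{\delta_n}{\lambda_n}<\infty,\qquad\limsup_{n\to\infty}\frac{\gamma_n}{\delta_n}<\infty.$$ Then $\frac{\gamma_n}{n}\sum_{u\in\mathcal{V}_n^k}\mathbf{1}\{A_n^k(u)\}\Rightarrow0$ as $n\to\infty$, for all $k\in\{1,2\}$.
   Context: For each $n$, the node set $\mathcal{V}_n=\mathcal{V}_n^1\cup\mathcal{V}_n^2$ is a disjoint union of two communities of sizes $V_n^k=|\mathcal{V}_n^k|$ with $V_n^k/n\to v^k\in(0,\infty)$. The graph $\mathcal{G}_n$ is a stochastic block model: each unordered pair of distinct nodes is an edge independently, with probability $a_n=a\lambda_n/n$ if both are in the same community and $b_n=b\lambda_n/n$ otherwise, where $a>b>0$ are constants and $\lambda_n\to\infty$. $N_n^k(u)$ denotes the number of neighbors of $u$ in $\mathcal{V}_n^k$. $\Rightarrow$ denotes weak convergence (here to the constant $0$). *)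

theory Defs
  imports "HOL-Probability.Probability"
begin

definition comm :: "(nat \<Rightarrow> nat \<Rightarrow> nat) \<Rightarrow> nat \<Rightarrow> nat \<Rightarrow> nat set" where
  "comm V n k = (if k = 1 then {..<V 1 n} else {V 1 n..<V 1 n + V 2 n})"

definition nodes :: "(nat \<Rightarrow> nat \<Rightarrow> nat) \<Rightarrow> nat \<Rightarrow> nat set" where
  "nodes V n = {..<V 1 n + V 2 n}"

text \<open>Unordered pairs of distinct nodes, represented as (i,j) with i < j.\<close>
definition node_pairs :: "(nat \<Rightarrow> nat \<Rightarrow> nat) \<Rightarrow> nat \<Rightarrow> (nat \<times> nat) set" where
  "node_pairs V n = {(i, j). i < j \<and> j \<in> nodes V n}"

definition edge_prob :: "(nat \<Rightarrow> nat \<Rightarrow> nat) \<Rightarrow> (nat \<Rightarrow> real) \<Rightarrow> (nat \<Rightarrow> real) \<Rightarrow> nat \<Rightarrow> nat \<times> nat \<Rightarrow> real" where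
  "edge_prob V p q n e = (if (fst e \<in> comm V n 1) = (snd e \<in> comm V n 1) then p n else q n)"

text \<open>Stochastic block model: independent Bernoulli edges; a graph is the indicator of its edge set.\<close>
definition sbm :: "(nat \<Rightarrow> nat \<Rightarrow> nat) \<Rightarrow> (nat \<Rightarrow> real) \<Rightarrow> (nat \<Rightarrow> real) \<Rightarrow> nat \<Rightarrow> (nat \<times> nat \<Rightarrow> bool) pmf" where
  "sbm V p q n = Pi_pmf (node_pairs V n) False (\<lambda>e. bernoulli_pmf (edge_prob V p q n e))"

definition adj :: "(nat \<times> nat \<Rightarrow> bool) \<Rightarrow> nat \<Rightarrow> nat \<Rightarrow> bool" where
  "adj G u w = (u \<noteq> w \<and> G (min u w, max u w))"

definition nbrs :: "(nat \<Rightarrow> nat \<Rightarrow> nat) \<Rightarrow> nat \<Rightarrow> nat \<Rightarrow> (nat \<times> nat \<Rightarrow> bool) \<Rightarrow> nat \<Rightarrow> nat" where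
  "nbrs V n k G u = card {w \<in> comm V n k. adj G u w}"

end

theory Submission
  imports Defs "HOL-Real_Asymp.Real_Asymp"
begin

text \<open>For \<open>u\<close> in community \<open>k\<close>, \<open>N\<^sub>n\<^sup>k(u)\<close> is binomial with \<open>V\<^sub>n\<^sup>k - 1\<close> trials and success
  probability \<open>a\<^sub>n\<close>, so its mean is within 1 of \<open>M\<^sub>n = a\<^sub>n V\<^sub>n\<^sup>k\<close>. Since \<open>M\<^sub>n\<close> grows like
  \<open>\<lambda>\<^sub>n\<close> and \<open>\<delta>\<^sub>n = O(\<lambda>\<^sub>n)\<close>, eventually \<open>\<delta>\<^sub>n \<le> R\<^sup>2 M\<^sub>n\<close> for a constant \<open>R \<ge> 1\<close>, and a
  Chernoff bound with exponent \<open>t = \<surd>(\<delta>\<^sub>n/M\<^sub>n)/(2R)\<close> gives \<open>P(A\<^sub>n\<^sup>k(u)) \<le> 4 exp(-\<delta>\<^sub>n/(4R))\<close>.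
  The expectation of \<open>\<gamma>\<^sub>n/n \<Sum>\<^sub>u 1{A\<^sub>n\<^sup>k(u)}\<close> is therefore
  \<open>O((\<gamma>\<^sub>n/\<delta>\<^sub>n) \<delta>\<^sub>n exp(-\<delta>\<^sub>n/(4R))) \<rightarrow> 0\<close>, and by Markov's inequality a nonnegative variable
  whose expectation tends to 0 converges in distribution to 0.\<close>

lemma cdf_return_0: "cdf (return borel (0::real)) x = (if x < 0 then 0 else 1)"
  by (simp add: cdf_def2 measure_return indicator_def)

lemma not_isCont_cdf_return_0: "\<not> isCont (cdf (return borel (0::real))) 0"
proof
  assume "isCont (cdf (return borel (0::real))) 0"
  moreover have "(\<lambda>m. - 1 / (real m + 1)) \<longlonglongrightarrow> (0::real)"
    by real_asymp
  ultimately have "(\<lambda>m. cdf (return borel 0) (- 1 / (real m + 1))) \<longlonglongrightarrow> cdf (return borel (0::real)) 0"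
    by (intro isCont_tendsto_compose[where g = "cdf (return borel 0)"])
  then show False
    by (simp add: cdf_return_0 LIMSEQ_const_iff divide_simps)
qed

lemma prob_le_ge_1_minus_expectation_div:
  fixes P :: "'a pmf" and X :: "'a \<Rightarrow> real"
  assumes "\<And>\<omega>. 0 \<le> X \<omega>" "integrable (measure_pmf P) X" "0 < x"
  shows "1 - measure_pmf.expectation P X / x \<le> measure_pmf.prob P {\<omega>. X \<omega> \<le> x}"
proof -
  have "measure_pmf.prob P {\<omega> \<in> space (measure_pmf P). X \<omega> \<ge> x} \<le> measure_pmf.expectation P X / x"
    by (rule integral_Markov_inequality_measure[where A = UNIV]) (use assms in auto)
  moreover have "measure_pmf.prob P ({\<omega>. X \<omega> \<le> x} \<union> {\<omega>. X \<omega> \<ge> x})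
      \<le> measure_pmf.prob P {\<omega>. X \<omega> \<le> x} + measure_pmf.prob P {\<omega>. X \<omega> \<ge> x}"
    by (rule measure_Un_le) auto
  moreover have "{\<omega>. X \<omega> \<le> x} \<union> {\<omega>. X \<omega> \<ge> x} = UNIV"
    by auto
  ultimately show ?thesis
    by simp
qed

lemma weak_conv_m_return_0_if_expectation_tendsto_0:
  fixes P :: "nat \<Rightarrow> 'a pmf" and X :: "nat \<Rightarrow> 'a \<Rightarrow> real"
  assumes nonneg: "\<And>n x. X n x \<ge> 0"
    and integrable: "\<And>n. integrable (measure_pmf (P n)) (X n)"
    and expectation: "(\<lambda>n. measure_pmf.expectation (P n) (X n)) \<longlonglongrightarrow> 0"
  shows "weak_conv_m (\<lambda>n. distr (measure_pmf (P n)) borel (X n)) (return borel 0)"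
  unfolding weak_conv_m_def weak_conv_def
proof (intro allI impI)
  fix x :: real
  assume "isCont (cdf (return borel 0)) x"
  then consider "x < 0" | "x > 0"
    using not_isCont_cdf_return_0 by (cases x "0::real" rule: linorder_cases) auto
  moreover have cdf_eq: "cdf (distr (measure_pmf (P n)) borel (X n)) x
      = measure_pmf.prob (P n) {\<omega>. X n \<omega> \<le> x}" for n
    by (simp add: cdf_def2 measure_distr vimage_def Int_def)
  ultimately show "(\<lambda>n. cdf (distr (measure_pmf (P n)) borel (X n)) x) \<longlonglongrightarrow> cdf (return borel 0) x"
  proof cases
    case 1
    then have "{\<omega>. X n \<omega> \<le> x} = {}" for n
      using nonneg[of n] by (auto simp: not_le intro: less_le_trans)
    with 1 show ?thesis
      by (simp add: cdf_eq cdf_return_0)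
  next
    case 2
    have markov_bound_limit: "(\<lambda>n. 1 - measure_pmf.expectation (P n) (X n) / x) \<longlonglongrightarrow> 1"
      using tendsto_diff[OF tendsto_const tendsto_divide_zero[OF expectation], of 1 x] by simp
    have "(\<lambda>n. measure_pmf.prob (P n) {\<omega>. X n \<omega> \<le> x}) \<longlonglongrightarrow> 1"
      by (rule tendsto_sandwich[OF eventuallyI eventuallyI markov_bound_limit tendsto_const])
         (simp_all add: prob_le_ge_1_minus_expectation_div nonneg integrable 2)
    with 2 show ?thesis
      by (simp add: cdf_eq cdf_return_0)
  qed
qed

lemma expectation_card_filter:
  fixes P :: "'a pmf" and A :: "'b \<Rightarrow> 'a \<Rightarrow> bool"
  assumes "finite S"
  shows "measure_pmf.expectation P (\<lambda>x. real (card {u \<in> S. A u x}))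
    = (\<Sum>u\<in>S. measure_pmf.prob P {x. A u x})"
proof -
  have "real (card {u \<in> S. A u x}) = (\<Sum>u\<in>S. indicator {x. A u x} x)" for x
    using assms by (simp add: indicator_def sum.If_cases Int_def)
  then show ?thesis
    by (simp add: Bochner_Integration.integral_sum measure_pmf.integrable_const_bound[where B = 1])
qed

lemma expectation_binomial_pmf_exp:
  assumes "p \<in> {0..1}"
  shows "measure_pmf.expectation (binomial_pmf m p) (\<lambda>j. exp (s * real j)) = (1 - p + p * exp s) ^ m"
proof -
  have "measure_pmf.expectation (binomial_pmf m p) (\<lambda>j. exp (s * real j))
      = (\<Sum>k\<le>m. real (m choose k) * (p * exp s) ^ k * (1 - p) ^ (m - k))"
    using assms by (simp add: expectation_binomial_pmf' power_mult_distrib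
        exp_of_nat_mult[symmetric] mult.commute mult.left_commute)
  also have "\<dots> = (p * exp s + (1 - p)) ^ m"
    by (simp add: binomial_ring)
  finally show ?thesis by (simp add: algebra_simps)
qed

text \<open>Hoeffding's bound \<open>exp(-2s\<^sup>2/m)\<close> from the library is too weak here: with \<open>s\<^sup>2 = M\<delta>\<close>
  and \<open>M \<approx> m p\<close> its exponent is \<open>2p\<delta>\<close>, while \<open>p\<^sub>n \<rightarrow> 0\<close>. The variance-sensitive exponential moment
  bound below is needed instead.\<close>

lemma binomial_pmf_prob_le_exp:
  assumes p: "p \<in> {0..1}" and S: "\<And>j. j \<in> S \<Longrightarrow> c \<le> s * real j"
  shows "measure_pmf.prob (binomial_pmf m p) S \<le> exp (real m * p * (exp s - 1) - c)"
proof -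
  have "measure_pmf.prob (binomial_pmf m p) S = measure_pmf.expectation (binomial_pmf m p) (indicator S)"
    by simp
  also have "\<dots> \<le> measure_pmf.expectation (binomial_pmf m p) (\<lambda>j. exp (- c) * exp (s * real j))"
    using p S by (intro integral_mono) (auto simp: indicator_def exp_minus field_simps)
  also have "\<dots> = exp (- c) * (1 - p + p * exp s) ^ m"
    using p by (simp add: expectation_binomial_pmf_exp)
  also have "\<dots> \<le> exp (- c) * exp (p * (exp s - 1)) ^ m"
  proof -
    have "0 \<le> 1 - p + p * exp s"
      using p by (intro add_nonneg_nonneg) auto
    moreover have "1 - p + p * exp s \<le> exp (p * (exp s - 1))"
      using exp_ge_add_one_self[of "p * (exp s - 1)"] by (simp add: algebra_simps)
    ultimately show ?thesis
      by (intro mult_left_mono power_mono) auto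
  qed
  also have "\<dots> = exp (real m * p * (exp s - 1) - c)"
    by (simp add: exp_diff exp_minus exp_of_nat_mult[symmetric] exp_add[symmetric] field_simps)
  finally show ?thesis .
qed

lemma binomial_pmf_upper_tail:
  assumes p: "p \<in> {0..1}" and mean: "real m * p \<le> M" and t: "0 \<le> t" "t \<le> 1"
  shows "measure_pmf.prob (binomial_pmf m p) {j. real j \<ge> M + s} \<le> exp (M * t\<^sup>2 - t * s)"
proof -
  have M: "0 \<le> M"
    using mean p by (metis atLeastAtMost_iff mult_nonneg_nonneg of_nat_0_le_iff order_trans)
  have "measure_pmf.prob (binomial_pmf m p) {j. real j \<ge> M + s}
      \<le> exp (real m * p * (exp t - 1) - t * (M + s))"
    using t by (intro binomial_pmf_prob_le_exp p) (auto intro: mult_left_mono)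
  also have "\<dots> \<le> exp (M * t\<^sup>2 - t * s)"
  proof -
    have "real m * p * (exp t - 1) \<le> M * (exp t - 1)"
      using mean t by (intro mult_right_mono) auto
    also have "\<dots> \<le> M * (t + t\<^sup>2)"
      using M exp_bound[OF t] by (intro mult_left_mono) auto
    finally show ?thesis by (simp add: algebra_simps)
  qed
  finally show ?thesis .
qed

lemma exp_minus_le_quadratic:
  fixes t :: real
  assumes "0 \<le> t"
  shows "exp (- t) \<le> 1 - t + t\<^sup>2"
proof -
  have "exp (- t) \<le> 1 / (1 + t)"
    using assms by (simp add: exp_minus inverse_eq_divide frac_le add_pos_nonneg)
  also have "\<dots> \<le> 1 - t + t\<^sup>2"
    using assms by (simp add: field_simps power2_eq_square)
  finally show ?thesis .
qed

lemma binomial_pmf_lower_tail: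
  assumes p: "p \<in> {0..1}" and mean: "M - 1 \<le> real m * p" and M: "0 \<le> M" and t: "0 \<le> t"
  shows "measure_pmf.prob (binomial_pmf m p) {j. real j \<le> M - s} \<le> exp (1 + M * t\<^sup>2 - t * s)"
proof -
  have "measure_pmf.prob (binomial_pmf m p) {j. real j \<le> M - s}
      \<le> exp (real m * p * (exp (- t) - 1) - (- t) * (M - s))"
    using t by (intro binomial_pmf_prob_le_exp p) (auto intro: mult_left_mono)
  also have "\<dots> \<le> exp (1 + M * t\<^sup>2 - t * s)"
  proof -
    have "real m * p * (exp (- t) - 1) \<le> (M - 1) * (exp (- t) - 1)"
      using mean t by (intro mult_right_mono_neg) auto
    also have "\<dots> = M * (exp (- t) - 1) + (1 - exp (- t))"
      by (simp add: algebra_simps)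
    also have "\<dots> \<le> M * (- t + t\<^sup>2) + 1"
      using M exp_minus_le_quadratic[OF t] by (intro add_mono mult_left_mono) auto
    finally show ?thesis by (simp add: algebra_simps)
  qed
  finally show ?thesis .
qed

lemma binomial_pmf_deviation_tail:
  assumes p: "p \<in> {0..1}" and mean: "real m * p \<le> M" "M - 1 \<le> real m * p"
    and M: "0 < M" and \<delta>: "0 < \<delta>" and R: "1 \<le> R" "\<delta> \<le> R\<^sup>2 * M"
  shows "measure_pmf.prob (binomial_pmf m p) {j. \<bar>real j - M\<bar> \<ge> sqrt (M * \<delta>)}
    \<le> 4 * exp (- \<delta> / (4 * R))"
proof -
  define s where "s = sqrt (M * \<delta>)"
  define t where "t = sqrt (\<delta> / M) / (2 * R)"
  have "sqrt (\<delta> / M) \<le> R"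
    using M R by (intro real_le_lsqrt) (auto simp: field_simps)
  then have t: "0 \<le> t" "t \<le> 1"
    using M \<delta> R by (auto simp: t_def field_simps)
  have "M * t\<^sup>2 = \<delta> / (4 * R\<^sup>2)"
    using M \<delta> by (simp add: t_def power_divide power_mult_distrib)
  moreover have "t * s = \<delta> / (2 * R)"
    using M \<delta> by (simp add: t_def s_def real_sqrt_mult[symmetric])
  moreover have "\<delta> / (4 * R\<^sup>2) \<le> \<delta> / (4 * R)"
    using \<delta> R by (intro divide_left_mono) (auto simp: power2_eq_square)
  ultimately have exponent: "M * t\<^sup>2 - t * s \<le> - \<delta> / (4 * R)"
    by (simp add: field_simps)
  have "measure_pmf.prob (binomial_pmf m p) {j. \<bar>real j - M\<bar> \<ge> s}
      \<le> measure_pmf.prob (binomial_pmf m p) ({j. real j \<ge> M + s} \<union> {j. real j \<le> M - s})"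
    by (intro measure_pmf.finite_measure_mono) auto
  also have "\<dots> \<le> measure_pmf.prob (binomial_pmf m p) {j. real j \<ge> M + s}
      + measure_pmf.prob (binomial_pmf m p) {j. real j \<le> M - s}"
    by (rule measure_Un_le) auto
  also have "\<dots> \<le> exp (M * t\<^sup>2 - t * s) + exp (1 + M * t\<^sup>2 - t * s)"
    using M by (intro add_mono binomial_pmf_upper_tail binomial_pmf_lower_tail p mean t) auto
  also have "\<dots> = (1 + exp 1) * exp (M * t\<^sup>2 - t * s)"
    by (simp add: exp_add[symmetric] algebra_simps)
  also have "\<dots> \<le> 4 * exp (- \<delta> / (4 * R))"
    using exponent exp_le by (intro mult_mono) auto
  finally show ?thesis
    by (simp add: s_def)
qed

lemma finite_comm: "finite (comm V n k)"
  by (simp add: comm_def)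

lemma card_comm: "k \<in> {1, 2} \<Longrightarrow> card (comm V n k) = V k n"
  by (auto simp: comm_def)

lemma comm_subset_nodes: "k \<in> {1, 2} \<Longrightarrow> comm V n k \<subseteq> nodes V n"
  by (auto simp: comm_def nodes_def)

lemma finite_node_pairs: "finite (node_pairs V n)"
  by (rule finite_subset[of _ "nodes V n \<times> nodes V n"]) (auto simp: node_pairs_def nodes_def)

lemma finite_set_pmf_sbm: "finite (set_pmf (sbm V p q n))"
  unfolding sbm_def set_Pi_pmf[OF finite_node_pairs]
  by (intro finite_PiE_dflt finite_node_pairs) auto

definition incident_pairs :: "(nat \<Rightarrow> nat \<Rightarrow> nat) \<Rightarrow> nat \<Rightarrow> nat \<Rightarrow> nat \<Rightarrow> (nat \<times> nat) set" where
  "incident_pairs V n k u = (\<lambda>w. (min u w, max u w)) ` (comm V n k - {u})"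

lemma finite_incident_pairs: "finite (incident_pairs V n k u)"
  by (simp add: incident_pairs_def finite_comm)

lemma card_incident_pairs:
  assumes "k \<in> {1, 2}" "u \<in> comm V n k"
  shows "card (incident_pairs V n k u) = V k n - 1"
proof -
  have "inj_on (\<lambda>w. (min u w, max u w)) (comm V n k - {u})"
    by (auto simp: inj_on_def min_def max_def split: if_splits)
  then show ?thesis
    using assms by (simp add: incident_pairs_def card_image finite_comm card_comm)
qed

lemma incident_pairs_subset_node_pairs:
  "k \<in> {1, 2} \<Longrightarrow> u \<in> comm V n k \<Longrightarrow> incident_pairs V n k u \<subseteq> node_pairs V n"
  using comm_subset_nodes[of k V n]
  by (auto simp: incident_pairs_def node_pairs_def min_def max_def)

lemma edge_prob_incident_pairs:
  "k \<in> {1, 2} \<Longrightarrow> u \<in> comm V n k \<Longrightarrow> e \<in> incident_pairs V n k u \<Longrightarrow> edge_prob V p q n e = p n"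
  by (auto simp: incident_pairs_def edge_prob_def comm_def min_def max_def split: if_splits)

lemma nbrs_eq_card_incident_pairs:
  "nbrs V n k G u = card {e \<in> incident_pairs V n k u. G e}"
proof -
  have "{e \<in> incident_pairs V n k u. G e}
      = (\<lambda>w. (min u w, max u w)) ` {w \<in> comm V n k. adj G u w}"
    by (auto simp: incident_pairs_def adj_def)
  moreover have "inj_on (\<lambda>w. (min u w, max u w)) {w \<in> comm V n k. adj G u w}"
    by (auto simp: inj_on_def adj_def min_def max_def split: if_splits)
  ultimately show ?thesis
    by (simp add: nbrs_def card_image)
qed

lemma nbrs_distribution:
  assumes k: "k \<in> {1, 2}" and u: "u \<in> comm V n k" and p: "p n \<in> {0..1}"
  shows "map_pmf (\<lambda>G. nbrs V n k G u) (sbm V p q n) = binomial_pmf (V k n - 1) (p n)"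
proof -
  let ?E = "incident_pairs V n k u"
  have "map_pmf (\<lambda>G. nbrs V n k G u) (sbm V p q n)
      = map_pmf (\<lambda>G. card {e \<in> ?E. G e}) (map_pmf (\<lambda>G e. if e \<in> ?E then G e else False) (sbm V p q n))"
    unfolding map_pmf_comp nbrs_eq_card_incident_pairs
    by (intro map_pmf_cong refl arg_cong[where f = card]) auto
  also have "map_pmf (\<lambda>G e. if e \<in> ?E then G e else False) (sbm V p q n)
      = Pi_pmf ?E False (\<lambda>e. bernoulli_pmf (edge_prob V p q n e))"
    unfolding sbm_def
    by (rule Pi_pmf_subset[symmetric, OF finite_node_pairs incident_pairs_subset_node_pairs[OF k u]])
  also have "\<dots> = Pi_pmf ?E False (\<lambda>_. bernoulli_pmf (p n))"
    by (rule Pi_pmf_cong) (simp_all add: edge_prob_incident_pairs[OF k u])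
  also have "map_pmf (\<lambda>G. card {e \<in> ?E. G e}) \<dots> = binomial_pmf (card ?E) (p n)"
    by (rule binomial_pmf_altdef'[symmetric, OF finite_incident_pairs refl p])
  finally show ?thesis
    by (simp add: card_incident_pairs[OF k u])
qed

lemma expectation_card_deviating_nbrs_le:
  assumes k: "k \<in> {1, 2}" and p: "p n \<in> {0..1}"
    and M: "0 < p n * real (V k n)" and \<delta>: "0 < \<delta>"
    and R: "1 \<le> R" "\<delta> \<le> R\<^sup>2 * (p n * real (V k n))"
  shows "measure_pmf.expectation (sbm V p q n) (\<lambda>G. real (card {u \<in> comm V n k.
      \<bar>real (nbrs V n k G u) - p n * real (V k n)\<bar> \<ge> sqrt (p n * real (V k n) * \<delta>)}))
    \<le> 4 * real (V k n) * exp (- \<delta> / (4 * R))"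
proof -
  let ?M = "p n * real (V k n)"
  have tail: "measure_pmf.prob (sbm V p q n) {G. \<bar>real (nbrs V n k G u) - ?M\<bar> \<ge> sqrt (?M * \<delta>)}
      \<le> 4 * exp (- \<delta> / (4 * R))" if u: "u \<in> comm V n k" for u
  proof -
    have "V k n \<ge> 1"
      using M by (cases "V k n") auto
    then have "real (V k n - 1) * p n \<le> ?M" "?M - 1 \<le> real (V k n - 1) * p n"
      using p by (auto simp: of_nat_diff algebra_simps intro: mult_left_mono)
    then have "measure_pmf.prob (binomial_pmf (V k n - 1) (p n)) {j. \<bar>real j - ?M\<bar> \<ge> sqrt (?M * \<delta>)}
        \<le> 4 * exp (- \<delta> / (4 * R))"
      using M \<delta> R by (intro binomial_pmf_deviation_tail p) auto
    then show ?thesis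
      unfolding nbrs_distribution[where p = p and q = q, OF k u p, symmetric]
      by (simp add: vimage_def)
  qed
  have "(\<Sum>u\<in>comm V n k. measure_pmf.prob (sbm V p q n)
        {G. \<bar>real (nbrs V n k G u) - ?M\<bar> \<ge> sqrt (?M * \<delta>)})
      \<le> (\<Sum>u\<in>comm V n k. 4 * exp (- \<delta> / (4 * R)))"
    by (rule sum_mono) (rule tail)
  then show ?thesis
    using k by (simp add: expectation_card_filter finite_comm card_comm)
qed

lemma limsup_less_infinity_eventually_le:
  fixes f :: "nat \<Rightarrow> real"
  assumes "limsup (\<lambda>n. ereal (f n)) < \<infinity>"
  obtains L where "0 < L" "eventually (\<lambda>n. f n \<le> L) sequentially"
proof -
  obtain C :: real where "limsup (\<lambda>n. ereal (f n)) < ereal C"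
    using assms by (cases "limsup (\<lambda>n. ereal (f n))") (auto, meson gt_ex)
  then have "eventually (\<lambda>n. ereal (f n) < ereal C) sequentially"
    by (rule Limsup_lessD)
  then have "eventually (\<lambda>n. f n \<le> max C 1) sequentially"
    by eventually_elim auto
  then show ?thesis
    using that[of "max C 1"] by auto
qed

lemma eventually_le_scaled_mean_degree:
  fixes V :: "nat \<Rightarrow> nat" and lam \<delta> :: "nat \<Rightarrow> real"
  assumes V: "(\<lambda>n. real (V n) / real n) \<longlonglongrightarrow> v" "0 < v" and a: "0 < a"
    and lam: "filterlim lam at_top sequentially"
    and \<delta>: "limsup (\<lambda>n. ereal (\<delta> n / lam n)) < \<infinity>"
  obtains R where "1 \<le> R"
    "eventually (\<lambda>n. 0 < a * lam n / real n * real (V n)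
       \<and> \<delta> n \<le> R\<^sup>2 * (a * lam n / real n * real (V n))) sequentially"
proof -
  obtain L where L: "0 < L" "eventually (\<lambda>n. \<delta> n / lam n \<le> L) sequentially"
    using limsup_less_infinity_eventually_le[OF \<delta>] by blast
  define R where "R = max 1 (2 * L / (a * v))"
  have R: "1 \<le> R" "R \<le> R\<^sup>2"
    using mult_right_mono[of 1 R R] by (auto simp: R_def power2_eq_square)
  have "eventually (\<lambda>n. 0 < lam n) sequentially"
    using lam by (simp add: filterlim_at_top_dense)
  moreover have "eventually (\<lambda>n. v / 2 < real (V n) / real n) sequentially"
    using V by (intro order_tendstoD(1)[OF V(1)]) auto
  ultimately have "eventually (\<lambda>n. 0 < a * lam n / real n * real (V n)
       \<and> \<delta> n \<le> R\<^sup>2 * (a * lam n / real n * real (V n))) sequentially"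
    using L(2)
  proof eventually_elim
    case (elim n)
    have "a * lam n * (v / 2) \<le> a * lam n * (real (V n) / real n)"
      using elim a by (intro mult_left_mono) auto
    then have M: "a * lam n * (v / 2) \<le> a * lam n / real n * real (V n)"
      by simp
    have "\<delta> n \<le> (2 * L / (a * v)) * (a * lam n * (v / 2))"
      using elim a V(2) by (simp add: field_simps)
    also have "\<dots> \<le> R * (a * lam n / real n * real (V n))"
      by (rule mult_mono[OF _ M]) (use L(1) a V(2) elim in \<open>auto simp: R_def\<close>)
    also have "\<dots> \<le> R\<^sup>2 * (a * lam n / real n * real (V n))"
      by (rule mult_right_mono) (use M a V(2) elim R in auto)
    finally have "\<delta> n \<le> R\<^sup>2 * (a * lam n / real n * real (V n))" .
    moreover have "0 < a * lam n * (v / 2)"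
      using a V(2) elim by simp
    ultimately show ?case
      using M by linarith
  qed
  with R show ?thesis
    using that by blast
qed

lemma scaled_exp_decay_tendsto_0:
  fixes V :: "nat \<Rightarrow> nat" and \<gamma> \<delta> :: "nat \<Rightarrow> real"
  assumes V: "(\<lambda>n. real (V n) / real n) \<longlonglongrightarrow> v"
    and \<delta>: "filterlim \<delta> at_top sequentially" "\<And>n. 0 < \<delta> n"
    and \<gamma>: "limsup (\<lambda>n. ereal (\<gamma> n / \<delta> n)) < \<infinity>" "\<And>n. 0 < \<gamma> n"
    and c: "0 < c"
  shows "(\<lambda>n. \<gamma> n / real n * real (V n) * exp (- c * \<delta> n)) \<longlonglongrightarrow> 0"
proof -
  obtain G where G: "0 < G" "eventually (\<lambda>n. \<gamma> n / \<delta> n \<le> G) sequentially"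
    using limsup_less_infinity_eventually_le[OF \<gamma>(1)] by blast
  have "((\<lambda>x. x * exp (- c * x)) \<longlongrightarrow> 0) at_top"
    using c by real_asymp
  from tendsto_mult_left[OF filterlim_compose[OF this \<delta>(1)], of "G * (v + 1)"]
  have lim: "(\<lambda>n. G * (v + 1) * (\<delta> n * exp (- c * \<delta> n))) \<longlonglongrightarrow> 0"
    by simp
  have bound: "eventually (\<lambda>n. \<gamma> n / real n * real (V n) * exp (- c * \<delta> n)
      \<le> G * (v + 1) * (\<delta> n * exp (- c * \<delta> n))) sequentially"
    using G(2) order_tendstoD(2)[OF V less_add_one]
  proof eventually_elim
    case (elim n)
    have "\<gamma> n / real n * real (V n) * exp (- c * \<delta> n)
        = (\<gamma> n / \<delta> n) * (real (V n) / real n) * (\<delta> n * exp (- c * \<delta> n))"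
      using \<delta>(2)[of n] by (simp add: field_simps)
    also have "\<dots> \<le> G * (v + 1) * (\<delta> n * exp (- c * \<delta> n))"
      using elim \<gamma>(2)[of n] \<delta>(2)[of n] G(1)
      by (intro mult_right_mono mult_mono) (auto intro: less_imp_le)
    finally show ?case .
  qed
  show ?thesis
    by (rule tendsto_sandwich[OF eventuallyI bound tendsto_const lim])
       (intro mult_nonneg_nonneg divide_nonneg_nonneg less_imp_le[OF \<gamma>(2)]; simp)
qed

lemma expectation_scaled_card_deviating_nbrs_tendsto_0:
  assumes k: "k \<in> {1, 2}" and p: "\<And>n. p n \<in> {0..1}"
    and R: "1 \<le> R"
    and mean_degree: "eventually (\<lambda>n. 0 < p n * real (V k n)
      \<and> \<delta> n \<le> R\<^sup>2 * (p n * real (V k n))) sequentially"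
    and V: "(\<lambda>n. real (V k n) / real n) \<longlonglongrightarrow> v"
    and \<delta>: "filterlim \<delta> at_top sequentially" "\<And>n. 0 < \<delta> n"
    and \<gamma>: "limsup (\<lambda>n. ereal (\<gamma> n / \<delta> n)) < \<infinity>" "\<And>n. 0 < \<gamma> n"
  shows "(\<lambda>n. measure_pmf.expectation (sbm V p q n) (\<lambda>G. \<gamma> n / real n * real (card {u \<in> comm V n k.
      \<bar>real (nbrs V n k G u) - p n * real (V k n)\<bar> \<ge> sqrt (p n * real (V k n) * \<delta> n)})))
    \<longlonglongrightarrow> 0"
proof -
  define h where "h = (\<lambda>n. 4 * (\<gamma> n / real n * real (V k n) * exp (- (1 / (4 * R)) * \<delta> n)))"
  have bound: "eventually (\<lambda>n. measure_pmf.expectation (sbm V p q n) (\<lambda>G. \<gamma> n / real n *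
      real (card {u \<in> comm V n k. \<bar>real (nbrs V n k G u) - p n * real (V k n)\<bar>
        \<ge> sqrt (p n * real (V k n) * \<delta> n)})) \<le> h n) sequentially"
    using mean_degree
  proof eventually_elim
    case (elim n)
    then have "\<gamma> n / real n * measure_pmf.expectation (sbm V p q n) (\<lambda>G. real (card {u \<in> comm V n k.
        \<bar>real (nbrs V n k G u) - p n * real (V k n)\<bar> \<ge> sqrt (p n * real (V k n) * \<delta> n)}))
      \<le> \<gamma> n / real n * (4 * real (V k n) * exp (- \<delta> n / (4 * R)))"
      using \<gamma>(2)[of n] \<delta>(2)[of n] R
      by (intro mult_left_mono expectation_card_deviating_nbrs_le k p) auto
    then show ?case
      by (simp add: h_def field_simps)
  qed
  have "h \<longlonglongrightarrow> 4 * 0"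
    unfolding h_def using R
    by (intro tendsto_mult_left scaled_exp_decay_tendsto_0[OF V \<delta> \<gamma>]) auto
  then have h_tendsto_0: "h \<longlonglongrightarrow> 0"
    by simp
  show ?thesis
    by (rule tendsto_sandwich[OF eventuallyI bound tendsto_const h_tendsto_0])
       (intro Bochner_Integration.integral_nonneg mult_nonneg_nonneg divide_nonneg_nonneg
          less_imp_le[OF \<gamma>(2)]; simp)
qed

theorem lemmaB2:
  fixes V :: "nat \<Rightarrow> nat \<Rightarrow> nat" and v :: "nat \<Rightarrow> real"
    and a b :: real and lam \<gamma> \<delta> :: "nat \<Rightarrow> real" and k :: nat
  assumes sizes: "\<And>j. j \<in> {1, 2} \<Longrightarrow> (\<lambda>n. real (V j n) / real n) \<longlonglongrightarrow> v j \<and> v j > 0"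
    and ab: "a > b" "b > 0"
    and lam_lim: "filterlim lam at_top sequentially"
    and lam_prob: "\<And>n. 0 \<le> lam n \<and> a * lam n / real n \<le> 1"
    and gam_pos: "\<And>n. \<gamma> n > 0"
    and del_pos: "\<And>n. \<delta> n > 0"
    and del_lim: "filterlim \<delta> at_top sequentially"
    and del_lam: "limsup (\<lambda>n. ereal (\<delta> n / lam n)) < \<infinity>"
    and gam_del: "limsup (\<lambda>n. ereal (\<gamma> n / \<delta> n)) < \<infinity>"
    and k: "k \<in> {1, 2}"
  shows "weak_conv_m
    (\<lambda>n. distr (measure_pmf (sbm V (\<lambda>m. a * lam m / real m) (\<lambda>m. b * lam m / real m) n)) borel
       (\<lambda>G. \<gamma> n / real n *
          real (card {u \<in> comm V n k.
             \<bar>real (nbrs V n k G u) - a * lam n / real n * real (V k n)\<bar>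
               \<ge> sqrt (a * lam n / real n * real (V k n) * \<delta> n)})))
    (return borel 0)"
proof -
  define p where "p = (\<lambda>m. a * lam m / real m)"
  define q where "q = (\<lambda>m. b * lam m / real m)"
  \<comment> \<open>Only edges inside community \<open>k\<close> matter for \<open>N\<^sub>n\<^sup>k(u)\<close>, so nothing is needed about \<open>q\<close>.\<close>
  have p: "p n \<in> {0..1}" for n
    using lam_prob[of n] ab by (auto simp: p_def)
  have V: "(\<lambda>n. real (V k n) / real n) \<longlonglongrightarrow> v k" "0 < v k"
    using sizes[OF k] by auto
  obtain R where R: "1 \<le> R" and mean_degree: "eventually (\<lambda>n. 0 < p n * real (V k n)
      \<and> \<delta> n \<le> R\<^sup>2 * (p n * real (V k n))) sequentially"
    using eventually_le_scaled_mean_degree[OF V, of a lam \<delta>] ab lam_lim del_lam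
    unfolding p_def by force
  note expectation_tendsto_0 = expectation_scaled_card_deviating_nbrs_tendsto_0
    [where V = V and k = k and p = p and q = q and \<gamma> = \<gamma> and \<delta> = \<delta>,
     OF k p R mean_degree V(1) del_lim del_pos gam_del gam_pos]
  show ?thesis
    using expectation_tendsto_0 unfolding p_def q_def
    by (intro weak_conv_m_return_0_if_expectation_tendsto_0 integrable_measure_pmf_finite
        finite_set_pmf_sbm)
       (intro mult_nonneg_nonneg divide_nonneg_nonneg less_imp_le[OF gam_pos]; simp)
qed

end
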